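(* Let $\rho=(r,U)$ be a universally quantified rule and let $(\pi_i\colon L\to L_i,\gamma_i\colon L_i\rightharpoonup R_i)$, $i\in\{1,2\}$, be instantiations of $\rho$ with $(\pi_2,\gamma_2)=(\pi_1,\gamma_1)\oplus u$ for some $u\in U$. Let $\mu_L\colon L_2\rightharpoonup L_1$, $\mu_R\colon R_2\rightharpoonup R_1$ and $\mu_R'\colon R_1\rightharpoonup R'$ be subgraph morphisms with $\gamma_1\circ\mu_L=\mu_R\circ\gamma_2$, and let $m\colon R'\to G$ be a total injective morphism. Then for every pushout complement $H_2$ of $\mu_R'\circ\mu_R\circ\gamma_2$ and $m$ whose morphism $m_2'\colon L_2\to H_2$ is total and injective, there is a pushout complement $H_1$ of $\mu_R'\circ\gamma_1$ and $m$ with $H_1\sqsubseteq H_2$.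
   Context: Fix a finite label set $\Lambda$ with arity function $\mathrm{ar}\colon\Lambda\to\mathbb N$. A (hyper)graph $G=(V_G,E_G,c_G,l_G)$ consists of finite sets $V_G$ (nodes) and $E_G$ (edges), a connection function $c_G\colon E_G\to V_G^*$ and a labelling $l_G\colon E_G\to\Lambda$ with $|c_G(e)|=\mathrm{ar}(l_G(e))$; an edge $e$ is incident to a node $v$ if $v$ occurs in $c_G(e)$. A morphism $\phi\colon G\rightharpoonup G'$ is a pair of partial functions $\phi_V,\phi_E$ such that whenever $\phi_E(e)$ is defined, $\phi_V$ is defined on all nodes incident to $e$, $l_{G'}(\phi_E(e))=l_G(e)$ and $\phi_V(c_G(e))=c_{G'}(\phi_E(e))$. "Total" means defined everywhere. Pushouts are taken in the category of graphs and partial morphisms (always exist, unique up to isomorphism; concretely: quotient of $G_1\sqcup G_2$ by the smallest equivalence identifying $\phi(x)$ and $\psi(x)$ for $x\in G_0$, dropping classes containing the image of an $x\in G_0$ on which $\phi$ or $\psi$ is undefined and edge classes incident to dropped node classes). Given $a\colon A\rightharpoonup B$ and $b\colon B\rightharpoonup D$, a pushout complement of $a$ and $b$ is a graph $C$ with morphisms $c\colon A\rightharpoonup C$, $d\colon C\rightharpoonup D$ such that $D$ with $b,d$ is a pushout of $a,c$. A subgraph morphism is an injective and surjective morphism; $G_1\sqsubseteq G_2$ ($G_1$ is a subgraph of $G_2$) if there is a subgraph morphism $G_2\rightharpoonup G_1$. A universally quantified rule is $\rho=(r,U)$ with $r\colon L\rightharpoonup R$ and $U$ a finite set of pairs $u=(p_u,q_u)$,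 $p_u\colon L\to L_u$ total injective, $q_u\colon L_u\rightharpoonup R_u$, such that for every $x\in L$, $q_u(p_u(x))$ is defined and has exactly one preimage under $q_u$; $Q(u)$ is the set of $v\in V_L$ such that some edge incident to $p_u(v)$ has no preimage under $p_u$, required nonempty. Instantiations $(\pi\colon L\to\overline L$ total injective, $\gamma\colon\overline L\rightharpoonup\overline R)$ are defined recursively: $(\mathrm{id}_L,r)$ is one (length 0); if $(\pi,\gamma)$ is one of length $n$ and $u\in U$, let $\overline L_u$ with $p_u'\colon\overline L\to\overline L_u$, $\pi'\colon L_u\to\overline L_u$ be the pushout of $\pi,p_u$, let $\overline R_u$ with $\alpha\colon\overline R\rightharpoonup\overline R_u$, $\beta\colon R_u\rightharpoonup\overline R_u$ be the pushout of $\gamma\circ\pi$ and $q_u\circ p_u$, and $\eta\colon\overline L_u\rightharpoonup\overline R_u$ the unique morphism with $\eta\circ p_u'=\alpha\circ\gamma$, $\eta\circ\pi'=\beta\circ q_u$; then $(\pi,\gamma)\oplus u:=(p_u'\circ\pi,\eta)$ is an instantiation of length $n+1$. *)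

theory Defs
  imports Main
begin

(* Nodes and edges are drawn from nat (every finite graph is isomorphic to one
   of these, so nothing is lost; all constructions are only up to isomorphism). *)
record 'l hgraph =
  V :: "nat set"
  E :: "nat set"
  conn :: "nat \<Rightarrow> nat list"
  lab :: "nat \<Rightarrow> 'l"

definition wf_graph :: "('l \<Rightarrow> nat) \<Rightarrow> 'l hgraph \<Rightarrow> bool" where
  "wf_graph ar G \<longleftrightarrow> finite (V G) \<and> finite (E G) \<and>
     (\<forall>e\<in>E G. set (conn G e) \<subseteq> V G \<and> length (conn G e) = ar (lab G e))"

type_synonym morph = "(nat \<rightharpoonup> nat) \<times> (nat \<rightharpoonup> nat)"

abbreviation mV :: "morph \<Rightarrow> nat \<rightharpoonup> nat" where "mV f \<equiv> fst f"
abbreviation mE :: "morph \<Rightarrow> nat \<rightharpoonup> nat" where "mE f \<equiv> snd f"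

definition is_morph :: "'l hgraph \<Rightarrow> 'l hgraph \<Rightarrow> morph \<Rightarrow> bool" where
  "is_morph G G' f \<longleftrightarrow>
     dom (mV f) \<subseteq> V G \<and> ran (mV f) \<subseteq> V G' \<and>
     dom (mE f) \<subseteq> E G \<and> ran (mE f) \<subseteq> E G' \<and>
     (\<forall>e e'. mE f e = Some e' \<longrightarrow>
        set (conn G e) \<subseteq> dom (mV f) \<and> lab G' e' = lab G e \<and>
        map (\<lambda>v. the (mV f v)) (conn G e) = conn G' e')"

definition mcomp :: "morph \<Rightarrow> morph \<Rightarrow> morph" (infixl "\<circ>\<^sub>g" 55) where
  "g \<circ>\<^sub>g f = (mV g \<circ>\<^sub>m mV f, mE g \<circ>\<^sub>m mE f)"

definition id_morph :: "'l hgraph \<Rightarrow> morph" where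
  "id_morph G = ((\<lambda>v. if v \<in> V G then Some v else None), (\<lambda>e. if e \<in> E G then Some e else None))"

definition total :: "'l hgraph \<Rightarrow> morph \<Rightarrow> bool" where
  "total G f \<longleftrightarrow> dom (mV f) = V G \<and> dom (mE f) = E G"

definition injective :: "morph \<Rightarrow> bool" where
  "injective f \<longleftrightarrow> inj_on (mV f) (dom (mV f)) \<and> inj_on (mE f) (dom (mE f))"

definition surjective :: "'l hgraph \<Rightarrow> morph \<Rightarrow> bool" where
  "surjective G' f \<longleftrightarrow> ran (mV f) = V G' \<and> ran (mE f) = E G'"

definition total_inj :: "('l \<Rightarrow> nat) \<Rightarrow> 'l hgraph \<Rightarrow> 'l hgraph \<Rightarrow> morph \<Rightarrow> bool" where
  "total_inj ar G G' f \<longleftrightarrow> is_morph G G' f \<and> total G f \<and> injective f"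

definition subgraph_morph :: "'l hgraph \<Rightarrow> 'l hgraph \<Rightarrow> morph \<Rightarrow> bool" where
  "subgraph_morph G G' f \<longleftrightarrow> is_morph G G' f \<and> injective f \<and> surjective G' f"

definition subgraph :: "'l hgraph \<Rightarrow> 'l hgraph \<Rightarrow> bool" where
  "subgraph G1 G2 \<longleftrightarrow> (\<exists>f. subgraph_morph G2 G1 f)"

definition is_pushout :: "('l \<Rightarrow> nat) \<Rightarrow> 'l hgraph \<Rightarrow> 'l hgraph \<Rightarrow> 'l hgraph \<Rightarrow> morph \<Rightarrow> morph
    \<Rightarrow> 'l hgraph \<Rightarrow> morph \<Rightarrow> morph \<Rightarrow> bool" where
  "is_pushout ar G0 G1 G2 phi psi D b d \<longleftrightarrow>
     wf_graph ar G0 \<and> wf_graph ar G1 \<and> wf_graph ar G2 \<and> wf_graph ar D \<and>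
     is_morph G0 G1 phi \<and> is_morph G0 G2 psi \<and> is_morph G1 D b \<and> is_morph G2 D d \<and>
     b \<circ>\<^sub>g phi = d \<circ>\<^sub>g psi \<and>
     (\<forall>(X :: 'l hgraph) x1 x2. wf_graph ar X \<and> is_morph G1 X x1 \<and> is_morph G2 X x2 \<and>
        x1 \<circ>\<^sub>g phi = x2 \<circ>\<^sub>g psi \<longrightarrow>
        (\<exists>!h. is_morph D X h \<and> h \<circ>\<^sub>g b = x1 \<and> h \<circ>\<^sub>g d = x2))"

definition is_po_complement :: "('l \<Rightarrow> nat) \<Rightarrow> 'l hgraph \<Rightarrow> 'l hgraph \<Rightarrow> 'l hgraph \<Rightarrow> morph \<Rightarrow> morph
    \<Rightarrow> 'l hgraph \<Rightarrow> morph \<Rightarrow> morph \<Rightarrow> bool" where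
  "is_po_complement ar A B D a b C c d \<longleftrightarrow> is_pushout ar A B C a c D b d"

record 'l qpair =
  Lu :: "'l hgraph"
  Ru :: "'l hgraph"
  pu :: morph
  qu :: morph

record 'l qrule =
  rL :: "'l hgraph"
  rR :: "'l hgraph"
  rr :: morph
  rU :: "'l qpair set"

definition Qset :: "'l qrule \<Rightarrow> 'l qpair \<Rightarrow> nat set" where
  "Qset \<rho> u = {v \<in> V (rL \<rho>). \<exists>e \<in> E (Lu u).
      the (mV (pu u) v) \<in> set (conn (Lu u) e) \<and> e \<notin> ran (mE (pu u))}"

definition wf_qpair :: "('l \<Rightarrow> nat) \<Rightarrow> 'l qrule \<Rightarrow> 'l qpair \<Rightarrow> bool" where
  "wf_qpair ar \<rho> u \<longleftrightarrow>
     wf_graph ar (Lu u) \<and> wf_graph ar (Ru u) \<and>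
     total_inj ar (rL \<rho>) (Lu u) (pu u) \<and> is_morph (Lu u) (Ru u) (qu u) \<and>
     (\<forall>x \<in> V (rL \<rho>). \<exists>y. (mV (qu u) \<circ>\<^sub>m mV (pu u)) x = Some y \<and>
         (\<exists>!z. mV (qu u) z = Some y)) \<and>
     (\<forall>x \<in> E (rL \<rho>). \<exists>y. (mE (qu u) \<circ>\<^sub>m mE (pu u)) x = Some y \<and>
         (\<exists>!z. mE (qu u) z = Some y)) \<and>
     Qset \<rho> u \<noteq> {}"

definition wf_qrule :: "('l \<Rightarrow> nat) \<Rightarrow> 'l qrule \<Rightarrow> bool" where
  "wf_qrule ar \<rho> \<longleftrightarrow> wf_graph ar (rL \<rho>) \<and> wf_graph ar (rR \<rho>) \<and>
     is_morph (rL \<rho>) (rR \<rho>) (rr \<rho>) \<and> finite (rU \<rho>) \<and> (\<forall>u \<in> rU \<rho>. wf_qpair ar \<rho> u)"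

(* (pi2, gamma2) = (pi1, gamma1) \<oplus> u, where L2, R2 are the respective pushout objects *)
definition oplus_step :: "('l \<Rightarrow> nat) \<Rightarrow> 'l qrule \<Rightarrow> 'l qpair
    \<Rightarrow> 'l hgraph \<Rightarrow> 'l hgraph \<Rightarrow> morph \<Rightarrow> morph
    \<Rightarrow> 'l hgraph \<Rightarrow> 'l hgraph \<Rightarrow> morph \<Rightarrow> morph \<Rightarrow> bool" where
  "oplus_step ar \<rho> u L1 R1 \<pi>1 \<gamma>1 L2 R2 \<pi>2 \<gamma>2 \<longleftrightarrow>
     (\<exists>p' \<pi>' \<alpha> \<beta>.
        is_pushout ar (rL \<rho>) L1 (Lu u) \<pi>1 (pu u) L2 p' \<pi>' \<and>
        is_pushout ar (rL \<rho>) R1 (Ru u) (\<gamma>1 \<circ>\<^sub>g \<pi>1) (qu u \<circ>\<^sub>g pu u) R2 \<alpha> \<beta> \<and>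
        is_morph L2 R2 \<gamma>2 \<and>
        \<gamma>2 \<circ>\<^sub>g p' = \<alpha> \<circ>\<^sub>g \<gamma>1 \<and> \<gamma>2 \<circ>\<^sub>g \<pi>' = \<beta> \<circ>\<^sub>g qu u \<and>
        \<pi>2 = p' \<circ>\<^sub>g \<pi>1)"

inductive is_instantiation :: "('l \<Rightarrow> nat) \<Rightarrow> 'l qrule
    \<Rightarrow> 'l hgraph \<Rightarrow> 'l hgraph \<Rightarrow> morph \<Rightarrow> morph \<Rightarrow> bool"
  for ar \<rho> where
  base: "is_instantiation ar \<rho> (rL \<rho>) (rR \<rho>) (id_morph (rL \<rho>)) (rr \<rho>)"
| step: "is_instantiation ar \<rho> L1 R1 \<pi>1 \<gamma>1 \<Longrightarrow> u \<in> rU \<rho> \<Longrightarrow>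
         oplus_step ar \<rho> u L1 R1 \<pi>1 \<gamma>1 L2 R2 \<pi>2 \<gamma>2 \<Longrightarrow>
         is_instantiation ar \<rho> L2 R2 \<pi>2 \<gamma>2"

end

theory Submission
  imports Defs
begin

(* Put a = muR' o gamma1.  The hypothesis gamma1 o muL = muR o gamma2 rewrites the
   span of the given pushout complement H2 as (a o muL, m2'), so G (with m, d2) is a pushout of
   a o muL and m2'.  Two general facts about pushouts of partial morphisms carry this over to a
   pushout of a itself:
   (1) Restriction: if D (with b, d) is a pushout of f and c : A -> C, it is also a pushout of f
       and c corestricted to the domain graph C|d, the part of C on which d is defined; C|d is a
       subgraph of C and d is total on it.
   (2) Inverting a subgraph morphism: if D is a pushout of a o mu and c, where mu is a subgraph
       morphism and d is total, then D is a pushout of a and c o mu^-1.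
   Hence H1 := H2|d2 is the required pushout complement, and H1 is a subgraph of H2. *)

lemma map_comp_assoc: "(h \<circ>\<^sub>m g) \<circ>\<^sub>m f = h \<circ>\<^sub>m (g \<circ>\<^sub>m f)"
  by (rule ext) (auto simp: map_comp_def split: option.splits)

lemma mcomp_assoc: "(h \<circ>\<^sub>g g) \<circ>\<^sub>g f = h \<circ>\<^sub>g (g \<circ>\<^sub>g f)"
  by (simp add: mcomp_def map_comp_assoc)

lemma map_comp_restrict: "g \<circ>\<^sub>m (f |` A) = (g \<circ>\<^sub>m f) |` A"
  by (rule ext) (simp add: restrict_map_def map_comp_def)

lemma restrict_map_dom_subset: "dom g \<subseteq> A \<Longrightarrow> g |` A = g"
  by (rule ext) (metis domIff in_mono restrict_in restrict_out)

lemma map_comp_Some [simp]: "g \<circ>\<^sub>m Some = g"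
  by (rule ext) (simp add: map_comp_def)

lemma morph_comp:
  assumes f: "is_morph A B f" and g: "is_morph B C g"
  shows "is_morph A C (g \<circ>\<^sub>g f)"
  unfolding is_morph_def
proof (intro conjI allI impI)
  show "dom (mV (g \<circ>\<^sub>g f)) \<subseteq> V A" "dom (mE (g \<circ>\<^sub>g f)) \<subseteq> E A"
    using f unfolding is_morph_def mcomp_def by (auto simp: map_comp_def split: option.splits)
  show "ran (mV (g \<circ>\<^sub>g f)) \<subseteq> V C" "ran (mE (g \<circ>\<^sub>g f)) \<subseteq> E C"
    using g unfolding is_morph_def mcomp_def
    by (fastforce simp: map_comp_def ran_def split: option.splits)+
  fix e e''
  assume "mE (g \<circ>\<^sub>g f) e = Some e''"
  then obtain e' where fe: "mE f e = Some e'" and ge: "mE g e' = Some e''"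
    by (auto simp: mcomp_def map_comp_Some_iff)
  have f1: "set (conn A e) \<subseteq> dom (mV f)" and f2: "lab B e' = lab A e"
    and f3: "map (\<lambda>v. the (mV f v)) (conn A e) = conn B e'"
    using f fe unfolding is_morph_def by blast+
  have g1: "set (conn B e') \<subseteq> dom (mV g)" and g2: "lab C e'' = lab B e'"
    and g3: "map (\<lambda>v. the (mV g v)) (conn B e') = conn C e''"
    using g ge unfolding is_morph_def by blast+
  (* every node incident to e is mapped by f to a node incident to e', where g is defined *)
  have incident: "\<exists>w. mV f v = Some w \<and> w \<in> dom (mV g)" if v: "v \<in> set (conn A e)" for v
  proof -
    obtain w where w: "mV f v = Some w" using f1 v by blast
    then have "w \<in> set (conn B e')" using v f3[symmetric] by force
    then show ?thesis using w g1 by auto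
  qed
  show "set (conn A e) \<subseteq> dom (mV (g \<circ>\<^sub>g f))"
    using incident by (fastforce simp: mcomp_def map_comp_def)
  show "lab C e'' = lab A e" using f2 g2 by simp
  have "map (\<lambda>v. the (mV (g \<circ>\<^sub>g f) v)) (conn A e)
        = map (\<lambda>w. the (mV g w)) (map (\<lambda>v. the (mV f v)) (conn A e))"
    using incident by (fastforce simp: mcomp_def map_comp_def)
  then show "map (\<lambda>v. the (mV (g \<circ>\<^sub>g f) v)) (conn A e) = conn C e''" using f3 g3 by simp
qed

section \<open>The domain graph of a morphism\<close>

(* The part of C on which the morphism d is defined; it is a graph because a morphism defined
   on an edge is defined on all its incident nodes. *)
definition dom_graph :: "'l hgraph \<Rightarrow> morph \<Rightarrow> 'l hgraph" where
  "dom_graph C d = C\<lparr>V := dom (mV d), E := dom (mE d)\<rparr>"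

lemma dom_graph_simps [simp]:
  "V (dom_graph C d) = dom (mV d)" "E (dom_graph C d) = dom (mE d)"
  "conn (dom_graph C d) = conn C" "lab (dom_graph C d) = lab C"
  by (simp_all add: dom_graph_def)

lemma id_morph_dom_graph:
  "id_morph (dom_graph C d) = (Some |` dom (mV d), Some |` dom (mE d))"
  by (auto simp: id_morph_def dom_graph_def restrict_map_def)

lemma mcomp_id_morph_dom_graph:
  assumes "dom (mV x) \<subseteq> dom (mV d)" and "dom (mE x) \<subseteq> dom (mE d)"
  shows "x \<circ>\<^sub>g id_morph (dom_graph C d) = x"
  using assms by (simp add: id_morph_dom_graph mcomp_def map_comp_restrict restrict_map_dom_subset)

lemma dom_graph_facts:
  assumes d: "is_morph C D d" and wf: "wf_graph ar C"
  shows "wf_graph ar (dom_graph C d)"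
    and "subgraph_morph C (dom_graph C d) (id_morph (dom_graph C d))"
    and "is_morph (dom_graph C d) D d"
    and "total (dom_graph C d) d"
    and "\<And>X x. is_morph (dom_graph C d) X x \<Longrightarrow> is_morph C X x"
proof -
  have dV: "dom (mV d) \<subseteq> V C" and dE: "dom (mE d) \<subseteq> E C"
    using d by (auto simp: is_morph_def)
  have closed: "\<And>e. e \<in> dom (mE d) \<Longrightarrow> set (conn C e) \<subseteq> dom (mV d)"
    using d unfolding is_morph_def by blast
  then have closed': "\<And>e e' v. mE d e = Some e' \<Longrightarrow> v \<in> set (conn C e) \<Longrightarrow> mV d v \<noteq> None"
    by blast
  show "wf_graph ar (dom_graph C d)" using wf dV dE closed unfolding wf_graph_def dom_graph_def
    by (auto intro: finite_subset)
  have "is_morph C (dom_graph C d) (id_morph (dom_graph C d))"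
    using dV dE closed' unfolding is_morph_def id_morph_dom_graph
    by (auto simp: dom_graph_def ran_def restrict_map_def split: if_splits intro!: map_idI)
  then show "subgraph_morph C (dom_graph C d) (id_morph (dom_graph C d))"
    by (auto simp: subgraph_morph_def injective_def surjective_def id_morph_dom_graph
        inj_on_def ran_def restrict_map_def split: if_splits)
  show "is_morph (dom_graph C d) D d" using d unfolding is_morph_def dom_graph_def by simp
  show "total (dom_graph C d) d" by (simp add: total_def dom_graph_def)
  fix X x assume "is_morph (dom_graph C d) X x"
  then show "is_morph C X x" using dV dE unfolding is_morph_def dom_graph_def by (simp, blast)
qed

lemma pushout_dom_graph:
  assumes po: "is_pushout ar A B C f c D b d"
  shows "is_pushout ar A B (dom_graph C d) f (id_morph (dom_graph C d) \<circ>\<^sub>g c) D b d"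
proof -
  let ?C' = "dom_graph C d" and ?s = "id_morph (dom_graph C d)"
  have wfC: "wf_graph ar C" and mc: "is_morph A C c" and md: "is_morph C D d"
    and comm: "b \<circ>\<^sub>g f = d \<circ>\<^sub>g c"
    and univ: "\<And>(X :: 'a hgraph) x1 x2. wf_graph ar X \<Longrightarrow> is_morph B X x1 \<Longrightarrow>
        is_morph C X x2 \<Longrightarrow> x1 \<circ>\<^sub>g f = x2 \<circ>\<^sub>g c \<Longrightarrow>
        (\<exists>!h. is_morph D X h \<and> h \<circ>\<^sub>g b = x1 \<and> h \<circ>\<^sub>g d = x2)"
    using po unfolding is_pushout_def by blast+
  note C' = dom_graph_facts[OF md wfC]
  have absorb: "x \<circ>\<^sub>g (?s \<circ>\<^sub>g c) = x \<circ>\<^sub>g c" if "is_morph ?C' X x" for X x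
  proof -
    have "dom (mV x) \<subseteq> dom (mV d)" "dom (mE x) \<subseteq> dom (mE d)"
      using that by (auto simp: is_morph_def dom_graph_def)
    then show ?thesis by (simp add: mcomp_assoc[symmetric] mcomp_id_morph_dom_graph)
  qed
  show ?thesis
    unfolding is_pushout_def
  proof (intro conjI allI impI)
    show "is_morph A ?C' (?s \<circ>\<^sub>g c)"
      using morph_comp[OF mc] C'(2) by (simp add: subgraph_morph_def)
    show "b \<circ>\<^sub>g f = d \<circ>\<^sub>g (?s \<circ>\<^sub>g c)" using comm absorb[OF C'(3)] by simp
    fix X :: "'a hgraph" and x1 x2
    assume "wf_graph ar X \<and> is_morph B X x1 \<and> is_morph ?C' X x2 \<and> x1 \<circ>\<^sub>g f = x2 \<circ>\<^sub>g (?s \<circ>\<^sub>g c)"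
    then show "\<exists>!h. is_morph D X h \<and> h \<circ>\<^sub>g b = x1 \<and> h \<circ>\<^sub>g d = x2"
      using univ C'(5) absorb by metis
  qed (use po C' in \<open>auto simp: is_pushout_def\<close>)
qed

section \<open>Inverting subgraph morphisms\<close>

definition minv :: "(nat \<rightharpoonup> nat) \<Rightarrow> (nat \<rightharpoonup> nat)" where
  "minv f x = (if x \<in> ran f then Some (THE y. f y = Some x) else None)"

definition minv_morph :: "morph \<Rightarrow> morph" where
  "minv_morph f = (minv (mV f), minv (mE f))"

lemma minv_Some:
  assumes "inj_on f (dom f)" "f y = Some x" shows "minv f x = Some y"
proof -
  have "x \<in> ran f" using assms(2) by (auto simp: ran_def)
  moreover have "(THE y. f y = Some x) = y"
    using assms by (intro the_equality) (auto simp: inj_on_def dom_def)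
  ultimately show ?thesis by (simp add: minv_def)
qed

lemma minv_dom: "dom (minv f) = ran f"
  by (auto simp: minv_def dom_def)

lemma minv_SomeD:
  assumes "inj_on f (dom f)" "minv f x = Some y" shows "f y = Some x"
proof -
  obtain y' where y': "f y' = Some x"
    using assms(2) by (auto simp: minv_def ran_def split: if_splits)
  with assms show ?thesis using minv_Some[OF assms(1) y'] by simp
qed

lemma minv_ran: "inj_on f (dom f) \<Longrightarrow> ran (minv f) \<subseteq> dom f"
  by (auto simp: ran_def dest: minv_SomeD)

lemma minv_cancel:
  assumes "inj_on mu (dom mu)" and "dom f \<subseteq> ran mu"
  shows "(f \<circ>\<^sub>m mu) \<circ>\<^sub>m minv mu = f"
proof (rule ext)
  fix x show "((f \<circ>\<^sub>m mu) \<circ>\<^sub>m minv mu) x = f x"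
  proof (cases "x \<in> ran mu")
    case True
    then obtain y where "mu y = Some x" by (auto simp: ran_def)
    then show ?thesis using minv_Some[OF assms(1)] by simp
  next
    case False
    then have "f x = None" using assms(2) by blast
    then show ?thesis using False by (simp add: minv_def)
  qed
qed

lemma minv_comp_self:
  assumes "inj_on mu (dom mu)" shows "minv mu \<circ>\<^sub>m mu = Some |` dom mu"
  by (rule ext) (auto simp: map_comp_def restrict_map_def minv_Some[OF assms] split: option.splits)

(* In a commuting square d o c = k o mu with dom x \<subseteq> dom d, the map x o c is defined only
   where mu is, so x o c o mu^-1 o mu = x o c. *)
lemma minv_cancel_commuting:
  assumes inj: "inj_on mu (dom mu)" and dx: "dom x \<subseteq> dom d" and sq: "d \<circ>\<^sub>m c = k \<circ>\<^sub>m mu"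
  shows "x \<circ>\<^sub>m c \<circ>\<^sub>m minv mu \<circ>\<^sub>m mu = x \<circ>\<^sub>m c"
proof -
  have "dom (x \<circ>\<^sub>m c) \<subseteq> dom mu"
  proof
    fix y assume "y \<in> dom (x \<circ>\<^sub>m c)"
    then obtain z where "c y = Some z" "z \<in> dom x" by (force simp: map_comp_Some_iff)
    then have "y \<in> dom (k \<circ>\<^sub>m mu)" using dx sq[symmetric] by (auto simp: map_comp_Some_iff)
    then show "y \<in> dom mu" by (auto simp: map_comp_Some_iff)
  qed
  have "x \<circ>\<^sub>m c \<circ>\<^sub>m minv mu \<circ>\<^sub>m mu = (x \<circ>\<^sub>m c) \<circ>\<^sub>m (minv mu \<circ>\<^sub>m mu)"
    by (simp add: map_comp_assoc)
  also have "\<dots> = (x \<circ>\<^sub>m c) |` dom mu"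
    by (simp add: minv_comp_self[OF inj] map_comp_restrict)
  finally show ?thesis using \<open>dom (x \<circ>\<^sub>m c) \<subseteq> dom mu\<close> by (simp add: restrict_map_dom_subset)
qed

lemma minv_morph_is_morph:
  assumes sm: "subgraph_morph B A mu" and wfA: "wf_graph ar A"
  shows "is_morph A B (minv_morph mu)"
proof -
  have mu: "is_morph B A mu"
    and injV: "inj_on (mV mu) (dom (mV mu))" and injE: "inj_on (mE mu) (dom (mE mu))"
    and ranV: "ran (mV mu) = V A" and ranE: "ran (mE mu) = E A"
    using sm by (auto simp: subgraph_morph_def injective_def surjective_def)
  show ?thesis unfolding is_morph_def minv_morph_def fst_conv snd_conv
  proof (intro conjI allI impI)
    show "dom (minv (mV mu)) \<subseteq> V A" "dom (minv (mE mu)) \<subseteq> E A"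
      by (simp_all add: minv_dom ranV ranE)
    show "ran (minv (mV mu)) \<subseteq> V B" "ran (minv (mE mu)) \<subseteq> E B"
      using minv_ran[OF injV] minv_ran[OF injE] mu by (auto simp: is_morph_def)
    fix e y assume "minv (mE mu) e = Some y"
    then have ye: "mE mu y = Some e" using minv_SomeD[OF injE] by blast
    have m1: "set (conn B y) \<subseteq> dom (mV mu)" and m2: "lab A e = lab B y"
      and m3: "map (\<lambda>v. the (mV mu v)) (conn B y) = conn A e"
      using mu ye unfolding is_morph_def by blast+
    have "e \<in> E A" using ranE ye by (auto simp: ran_def)
    then show "set (conn A e) \<subseteq> dom (minv (mV mu))"
      using wfA by (auto simp: wf_graph_def minv_dom ranV)
    show "lab B y = lab A e" using m2 by simp
    have "map (\<lambda>v. the (minv (mV mu) v)) (conn A e)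
          = map (\<lambda>w. the (minv (mV mu) (the (mV mu w)))) (conn B y)"
      using m3[symmetric] by simp
    also have "\<dots> = conn B y"
      using m1 by (intro map_idI) (auto simp: minv_Some[OF injV])
    finally show "map (\<lambda>v. the (minv (mV mu) v)) (conn A e) = conn B y" .
  qed
qed

lemma pushout_minv:
  assumes po: "is_pushout ar A2 B C (a \<circ>\<^sub>g mu) c D b d"
    and sm: "subgraph_morph A2 A1 mu" and wfA1: "wf_graph ar A1"
    and ma: "is_morph A1 B a" and tot: "total C d"
  shows "is_pushout ar A1 B C a (c \<circ>\<^sub>g minv_morph mu) D b d"
proof -
  have mc: "is_morph A2 C c" and comm: "b \<circ>\<^sub>g (a \<circ>\<^sub>g mu) = d \<circ>\<^sub>g c"
    and univ: "\<And>(X :: 'a hgraph) x1 x2. wf_graph ar X \<Longrightarrow> is_morph B X x1 \<Longrightarrow>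
        is_morph C X x2 \<Longrightarrow> x1 \<circ>\<^sub>g (a \<circ>\<^sub>g mu) = x2 \<circ>\<^sub>g c \<Longrightarrow>
        (\<exists>!h. is_morph D X h \<and> h \<circ>\<^sub>g b = x1 \<and> h \<circ>\<^sub>g d = x2)"
    using po unfolding is_pushout_def by blast+
  have injV: "inj_on (mV mu) (dom (mV mu))" and injE: "inj_on (mE mu) (dom (mE mu))"
    and ranV: "ran (mV mu) = V A1" and ranE: "ran (mE mu) = E A1"
    using sm by (auto simp: subgraph_morph_def injective_def surjective_def)
  have "dom (mV a) \<subseteq> ran (mV mu)" "dom (mE a) \<subseteq> ran (mE mu)"
    using ma ranV ranE by (auto simp: is_morph_def)
  then have cancel: "(a \<circ>\<^sub>g mu) \<circ>\<^sub>g minv_morph mu = a"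
    by (simp add: mcomp_def minv_morph_def minv_cancel[OF injV] minv_cancel[OF injE])
  (* morphisms out of C are defined only where d is, so they cancel mu^-1 o mu *)
  have cancel_commuting: "x \<circ>\<^sub>g (c \<circ>\<^sub>g minv_morph mu) \<circ>\<^sub>g mu = x \<circ>\<^sub>g c" if "is_morph C X x" for X x
  proof -
    have dV: "dom (mV x) \<subseteq> dom (mV d)" and dE: "dom (mE x) \<subseteq> dom (mE d)"
      using that tot by (auto simp: is_morph_def total_def)
    have sqV: "mV d \<circ>\<^sub>m mV c = (mV b \<circ>\<^sub>m mV a) \<circ>\<^sub>m mV mu"
      and sqE: "mE d \<circ>\<^sub>m mE c = (mE b \<circ>\<^sub>m mE a) \<circ>\<^sub>m mE mu"
      using comm by (simp_all add: mcomp_def map_comp_assoc prod_eq_iff)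
    show ?thesis
      using minv_cancel_commuting[OF injV dV sqV] minv_cancel_commuting[OF injE dE sqE]
      by (simp add: mcomp_def minv_morph_def map_comp_assoc)
  qed
  show ?thesis
    unfolding is_pushout_def
  proof (intro conjI allI impI)
    show "is_morph A1 C (c \<circ>\<^sub>g minv_morph mu)"
      using morph_comp[OF minv_morph_is_morph[OF sm wfA1] mc] .
    have "b \<circ>\<^sub>g a = (b \<circ>\<^sub>g (a \<circ>\<^sub>g mu)) \<circ>\<^sub>g minv_morph mu"
      by (simp only: mcomp_assoc[of b] cancel)
    then show "b \<circ>\<^sub>g a = d \<circ>\<^sub>g (c \<circ>\<^sub>g minv_morph mu)" by (simp add: comm mcomp_assoc)
    fix X :: "'a hgraph" and x1 x2
    assume H: "wf_graph ar X \<and> is_morph B X x1 \<and> is_morph C X x2 \<and>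
      x1 \<circ>\<^sub>g a = x2 \<circ>\<^sub>g (c \<circ>\<^sub>g minv_morph mu)"
    then have "x1 \<circ>\<^sub>g (a \<circ>\<^sub>g mu) = x2 \<circ>\<^sub>g c"
      using cancel_commuting by (metis mcomp_assoc)
    then show "\<exists>!h. is_morph D X h \<and> h \<circ>\<^sub>g b = x1 \<and> h \<circ>\<^sub>g d = x2" using H univ by blast
  qed (use po wfA1 ma in \<open>auto simp: is_pushout_def\<close>)
qed

lemma instantiation_morph:
  assumes "wf_qrule ar \<rho>" "is_instantiation ar \<rho> L R \<pi> \<gamma>"
  shows "is_morph L R \<gamma>"
  using assms(2)
proof (induction rule: is_instantiation.induct)
  case base
  then show ?case using assms(1) by (simp add: wf_qrule_def)
next
  case (step L1 R1 \<pi>1 \<gamma>1 u L2 R2 \<pi>2 \<gamma>2)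
  then show ?case by (auto simp: oplus_step_def)
qed

theorem mainTheorem3:
  fixes ar :: "'l::finite \<Rightarrow> nat"
    and \<rho> :: "'l qrule" and u :: "'l qpair"
    and L1 R1 L2 R2 R' G :: "'l hgraph"
    and \<pi>1 \<gamma>1 \<pi>2 \<gamma>2 \<mu>L \<mu>R \<mu>R' m :: morph
  assumes "wf_qrule ar \<rho>"
    and "is_instantiation ar \<rho> L1 R1 \<pi>1 \<gamma>1"
    and "is_instantiation ar \<rho> L2 R2 \<pi>2 \<gamma>2"
    and "u \<in> rU \<rho>"
    and "oplus_step ar \<rho> u L1 R1 \<pi>1 \<gamma>1 L2 R2 \<pi>2 \<gamma>2"
    and "wf_graph ar R'" and "wf_graph ar G"
    and "subgraph_morph L2 L1 \<mu>L"
    and "subgraph_morph R2 R1 \<mu>R"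
    and "subgraph_morph R1 R' \<mu>R'"
    and "\<gamma>1 \<circ>\<^sub>g \<mu>L = \<mu>R \<circ>\<^sub>g \<gamma>2"
    and "total_inj ar R' G m"
  shows "\<forall>(H2 :: 'l hgraph) m2' d2.
           is_po_complement ar L2 R' G (\<mu>R' \<circ>\<^sub>g \<mu>R \<circ>\<^sub>g \<gamma>2) m H2 m2' d2 \<and>
           total_inj ar L2 H2 m2' \<longrightarrow>
           (\<exists>(H1 :: 'l hgraph) m1' d1.
              is_po_complement ar L1 R' G (\<mu>R' \<circ>\<^sub>g \<gamma>1) m H1 m1' d1 \<and> subgraph H1 H2)"
proof (intro allI impI, elim conjE)
  fix H2 m2' d2
  assume "is_po_complement ar L2 R' G (\<mu>R' \<circ>\<^sub>g \<mu>R \<circ>\<^sub>g \<gamma>2) m H2 m2' d2"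
  moreover have "\<mu>R' \<circ>\<^sub>g \<mu>R \<circ>\<^sub>g \<gamma>2 = (\<mu>R' \<circ>\<^sub>g \<gamma>1) \<circ>\<^sub>g \<mu>L"
    using assms(11) by (simp add: mcomp_assoc)
  ultimately have po2: "is_pushout ar L2 R' H2 ((\<mu>R' \<circ>\<^sub>g \<gamma>1) \<circ>\<^sub>g \<mu>L) m2' G m d2"
    by (simp add: is_po_complement_def)
  define H1 where "H1 = dom_graph H2 d2"
  have d2: "is_morph H2 G d2" and wfH2: "wf_graph ar H2"
    using po2 by (auto simp: is_pushout_def)
  have wfL1: "wf_graph ar L1"
    using assms(5) unfolding oplus_step_def is_pushout_def by blast
  have a: "is_morph L1 R' (\<mu>R' \<circ>\<^sub>g \<gamma>1)"
    using morph_comp[OF instantiation_morph[OF assms(1,2)]] assms(10)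
    by (simp add: subgraph_morph_def)
  have "is_pushout ar L2 R' H1 ((\<mu>R' \<circ>\<^sub>g \<gamma>1) \<circ>\<^sub>g \<mu>L) (id_morph H1 \<circ>\<^sub>g m2') G m d2"
    unfolding H1_def by (rule pushout_dom_graph[OF po2])
  then have "is_pushout ar L1 R' H1 (\<mu>R' \<circ>\<^sub>g \<gamma>1) (id_morph H1 \<circ>\<^sub>g m2' \<circ>\<^sub>g minv_morph \<mu>L) G m d2"
    using pushout_minv assms(8) wfL1 a dom_graph_facts(4)[OF d2 wfH2] unfolding H1_def by blast
  moreover have "subgraph H1 H2"
    unfolding subgraph_def H1_def using dom_graph_facts(2)[OF d2 wfH2] by blast
  ultimately show "\<exists>H1 m1' d1. is_po_complement ar L1 R' G (\<mu>R' \<circ>\<^sub>g \<gamma>1) m H1 m1' d1 \<and> subgraph H1 H2"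
    unfolding is_po_complement_def by blast
qed

end
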